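(* Let $p$ be a prime and $a,b,c\ge0$ integers with $a,b<p$ and $c\le a+b$. Then: (1) $\deg f(a,b,c)=\min\{a,c\}$; (2) $v_t(f(a,b,c))=\max\{0,c-b\}$; (3) $v_{t-1}(f(a,b,c))=a+b-(p-1)$ if $a+b-(p-1)\le c\le p-1<a+b$, and $v_{t-1}(f(a,b,c))=0$ otherwise.
   Context: For non-negative integers $a,b,c$, $f(a,b,c)\in\overline{\mathbb{F}}_p[t]$ is the polynomial $f(a,b,c)=\sum_{i_2+i_3=c}\binom{a}{i_2}\binom{b}{i_3}t^{i_2}$ (binomial coefficients reduced mod $p$, $\binom{n}{i}=0$ for $i<0$ or $i>n$); equivalently the coefficient of $\lambda^c$ in $(1+\lambda t)^a(1+\lambda)^b$. $v_t$ and $v_{t-1}$ denote the orders of vanishing at $t=0$ and $t=1$. *)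

theory Defs
  imports "HOL-Computational_Algebra.Polynomial"
begin

definition fpoly :: "nat \<Rightarrow> nat \<Rightarrow> nat \<Rightarrow> 'a::field poly" where
  "fpoly a b c = (\<Sum>i2\<in>{0..c}. monom (of_nat ((a choose i2) * (b choose (c - i2)))) i2)"

end

theory Submission
  imports Defs
begin

text \<open>Reading off the definition, the coefficient of \<open>t\<^sup>i\<close> is
  \<open>(a choose i)(b choose (c - i))\<close>, and binomials below \<open>p\<close> are units mod \<open>p\<close>; this gives the
  degree and the order at \<open>0\<close>. For the order at \<open>1\<close>, substitute \<open>t = 1 + s\<close> in
  \<open>(1 + \<lambda>t)\<^sup>a (1 + \<lambda>)\<^sup>b = (\<lambda>s + (1 + \<lambda>))\<^sup>a (1 + \<lambda>)\<^sup>b\<close>: the coefficient of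
  \<open>s\<^sup>j \<lambda>\<^sup>c\<close> is \<open>(a choose j)((a + b - j) choose (c - j))\<close>. Since all top entries are
  below \<open>2p\<close>, \<open>p\<close> divides \<open>n choose k\<close> exactly when \<open>p \<le> n\<close> but \<open>k, n - k < p\<close>
  (a carry in Kummer's sense), which locates the first nonzero term.\<close>

lemma prime_not_dvd_choose_of_ge:
  fixes p n k :: nat
  assumes "prime p" "k \<le> n" "k < p" "p \<le> n - k" "n < 2 * p"
  shows "\<not> p dvd (n choose k)"
proof
  assume dvd: "p dvd (n choose k)"
  have "fact k * fact (n - k) * (n choose k) = (fact n :: nat)"
    using binomial_fact_lemma[OF assms(2)] .
  moreover have "fact n = prod Suc {n - k..<n} * (fact (n - k) :: nat)"
    using fact_split[OF assms(2), where 'a=nat] by simp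
  ultimately have "fact k * (n choose k) = prod Suc {n - k..<n}"
    by (metis (no_types, lifting) fact_nonzero mult.commute mult.left_commute mult_cancel_left)
  \<comment> \<open>but the factors \<open>n - k + 1, \<dots>, n\<close> all lie strictly between \<open>p\<close> and \<open>2p\<close>\<close>
  with dvd have "p dvd prod Suc {n - k..<n}"
    by (metis dvd_mult)
  then obtain i where i: "i \<in> {n - k..<n}" "p dvd Suc i"
    using prime_dvd_prod_iff[OF _ assms(1)] by blast
  then obtain q where q: "Suc i = p * q"
    by (auto elim: dvdE)
  have "p < Suc i" "Suc i < 2 * p"
    using i assms by auto
  then have "p * 1 < p * q" "p * q < p * 2"
    using q by (simp_all add: mult.commute)
  then have "1 < q" "q < 2"
    by (simp_all only: mult_less_cancel1)
  then show False by simp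
qed

lemma prime_dvd_choose_iff:
  fixes p n k :: nat
  assumes "prime p" "k \<le> n" "n < 2 * p"
  shows "p dvd (n choose k) \<longleftrightarrow> p \<le> n \<and> k < p \<and> n - k < p"
proof -
  have fact_eq: "fact k * fact (n - k) * (n choose k) = (fact n :: nat)"
    using binomial_fact_lemma[OF assms(2)] .
  show ?thesis
  proof
    assume dvd: "p dvd (n choose k)"
    then have "p dvd (fact n :: nat)"
      by (metis fact_eq dvd_mult)
    then have "p \<le> n"
      using assms(1) by (simp add: prime_dvd_fact_iff)
    moreover have "k < p"
    proof (rule ccontr)
      assume "\<not> k < p"
      then have "\<not> p dvd (n choose (n - k))"
        using assms by (intro prime_not_dvd_choose_of_ge) auto
      with dvd show False
        using assms(2) by (simp add: binomial_symmetric[symmetric])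
    qed
    moreover have "n - k < p"
      using prime_not_dvd_choose_of_ge[OF assms(1,2) \<open>k < p\<close> _ assms(3)] dvd by force
    ultimately show "p \<le> n \<and> k < p \<and> n - k < p" by blast
  next
    assume bounds: "p \<le> n \<and> k < p \<and> n - k < p"
    have "p dvd (fact n :: nat)"
      using assms(1) bounds by (simp add: prime_dvd_fact_iff)
    then have "p dvd fact k * fact (n - k) * (n choose k)"
      by (simp only: fact_eq)
    moreover have "\<not> p dvd fact k" "\<not> p dvd fact (n - k)"
      using assms(1) bounds by (simp_all add: prime_dvd_fact_iff)
    ultimately show "p dvd (n choose k)"
      using assms(1) by (simp add: prime_dvd_mult_iff)
  qed
qed

lemma of_nat_choose_neq_0_of_less_CHAR:
  assumes "prime CHAR('a::semiring_1)" "k \<le> n" "n < CHAR('a)"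
  shows "(of_nat (n choose k) :: 'a) \<noteq> 0"
  using assms prime_dvd_choose_iff[of "CHAR('a)" k n]
  by (simp add: of_nat_eq_0_iff_char_dvd)

lemma degree_sum_monom_eq:
  fixes e :: "nat \<Rightarrow> 'a::comm_monoid_add"
  assumes "m \<le> n" "e m \<noteq> 0" "\<And>j. m < j \<Longrightarrow> j \<le> n \<Longrightarrow> e j = 0"
  shows "degree (\<Sum>j\<in>{0..n}. monom (e j) j) = m"
proof (rule antisym)
  show "degree (\<Sum>j\<in>{0..n}. monom (e j) j) \<le> m"
    using assms by (intro degree_le) (auto simp: coeff_sum coeff_monom)
  have "coeff (\<Sum>j\<in>{0..n}. monom (e j) j) m = e m"
    using assms by (simp add: coeff_sum coeff_monom)
  then show "m \<le> degree (\<Sum>j\<in>{0..n}. monom (e j) j)"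
    using assms by (metis le_degree)
qed

lemma order_sum_smult_linear_power_eq:
  fixes d :: "nat \<Rightarrow> 'a::field" and x :: 'a
  assumes "m \<le> n" "d m \<noteq> 0" "\<And>j. j < m \<Longrightarrow> d j = 0"
  shows "order x (\<Sum>j\<in>{0..n}. smult (d j) ([:-x, 1:] ^ j)) = m"
proof -
  let ?q = "[:-x, 1:]"
  define h where "h = (\<Sum>j\<in>{m..n}. smult (d j) (?q ^ (j - m)))"
  have "(\<Sum>j\<in>{0..n}. smult (d j) (?q ^ j)) = (\<Sum>j\<in>{m..n}. smult (d j) (?q ^ j))"
    by (rule sum.mono_neutral_right) (use assms in auto)
  also have "\<dots> = ?q ^ m * h"
    unfolding h_def sum_distrib_left
  proof (rule sum.cong)
    fix j assume "j \<in> {m..n}"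
    then have "?q ^ j = ?q ^ m * ?q ^ (j - m)"
      by (simp add: power_add[symmetric])
    then show "smult (d j) (?q ^ j) = ?q ^ m * smult (d j) (?q ^ (j - m))"
      by simp
  qed simp
  finally have factor: "(\<Sum>j\<in>{0..n}. smult (d j) (?q ^ j)) = ?q ^ m * h" .
  have "poly h x = (\<Sum>j\<in>{m..n}. d j * 0 ^ (j - m))"
    unfolding h_def by (simp add: poly_sum)
  also have "\<dots> = (\<Sum>j\<in>{m..n}. if j = m then d m else 0)"
    by (rule sum.cong) auto
  finally have h_x: "poly h x \<noteq> 0"
    using assms by simp
  then have "?q ^ m * h \<noteq> 0"
    by auto
  then have "order x (?q ^ m * h) = order x (?q ^ m) + order x h"
    by (rule order_mult)
  also have "\<dots> = m"
    using h_x by (simp add: order_power_n_n order_0I)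
  finally show ?thesis
    using factor by simp
qed

lemma coeff_linear_poly_power':
  fixes a b :: "'a::comm_semiring_1"
  shows "coeff ([:a, b:] ^ n) i = of_nat (n choose i) * b ^ i * a ^ (n - i)"
proof (cases "i \<le> n")
  case True
  then show ?thesis by (rule coeff_linear_poly_power)
next
  case False
  have "degree ([:a, b:] ^ n) \<le> n"
    by (rule order.trans[OF degree_power_le]) (simp add: degree_pCons_le)
  with False show ?thesis
    by (simp add: coeff_eq_0 binomial_eq_0)
qed

text \<open>In the bivariate generating function the outer variable is \<open>\<lambda>\<close> and the inner one is \<open>t\<close>.\<close>

lemma fpoly_eq_coeff_generating_function:
  "fpoly a b c = coeff ([:1, [:0, 1:]:] ^ a * [:1, 1:] ^ b :: 'a::field poly poly) c"
  unfolding fpoly_def coeff_mult atLeast0AtMost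
  by (rule sum.cong) (simp_all add: coeff_linear_poly_power' of_nat_poly monom_altdef mult_ac)

lemma fpoly_expansion_at_1:
  "(fpoly a b c :: 'a::field poly) =
     (\<Sum>j\<in>{0..c}. smult (of_nat ((a choose j) * ((a + b - j) choose (c - j)))) ([:-1, 1:] ^ j))"
proof -
  define s :: "'a poly" where "s = [:-1, 1:]"
  define u :: "'a poly poly" where "u = [:1, 1:]"
  have coeff_u_power: "coeff (u ^ n) k = of_nat (n choose k)" for n k
    by (simp add: u_def coeff_linear_poly_power')
  have shift: "[:1, [:0, 1:]:] = monom s 1 + u"
    by (simp add: s_def u_def monom_Suc monom_0 one_pCons)
  have "[:1, [:0, 1:]:] ^ a * u ^ b =
      (\<Sum>k\<le>a. of_nat (a choose k) * monom s 1 ^ k * u ^ (a - k)) * u ^ b"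
    unfolding shift binomial_ring ..
  also have "\<dots> = (\<Sum>k\<le>a. monom (of_nat (a choose k) * s ^ k) k * u ^ (a + b - k))"
    unfolding sum_distrib_right
  proof (rule sum.cong)
    fix k assume "k \<in> {..a}"
    then have "u ^ (a + b - k) = u ^ (a - k) * u ^ b"
      by (simp add: power_add[symmetric])
    then show "of_nat (a choose k) * monom s 1 ^ k * u ^ (a - k) * u ^ b
        = monom (of_nat (a choose k) * s ^ k) k * u ^ (a + b - k)"
      by (simp add: monom_power of_nat_poly smult_monom mult_ac)
  qed simp
  finally have expand: "[:1, [:0, 1:]:] ^ a * u ^ b
      = (\<Sum>k\<le>a. monom (of_nat (a choose k) * s ^ k) k * u ^ (a + b - k))" .
  have "coeff ([:1, [:0, 1:]:] ^ a * u ^ b) c =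
      (\<Sum>k\<le>a. if c < k then 0 else of_nat (a choose k) * s ^ k * of_nat ((a + b - k) choose (c - k)))"
    unfolding expand coeff_sum coeff_monom_mult by (rule sum.cong) (simp_all only: coeff_u_power)
  also have "\<dots> = (\<Sum>k\<le>a + c. if c < k then 0
      else of_nat (a choose k) * s ^ k * of_nat ((a + b - k) choose (c - k)))"
    by (rule sum.mono_neutral_left) (auto simp: binomial_eq_0)
  also have "\<dots> = (\<Sum>k\<le>a + c. if c < k then 0
      else smult (of_nat ((a choose k) * ((a + b - k) choose (c - k)))) (s ^ k))"
    by (rule sum.cong) (auto simp: of_nat_poly mult_ac)
  also have "\<dots> = (\<Sum>k\<le>c. smult (of_nat ((a choose k) * ((a + b - k) choose (c - k)))) (s ^ k))"
    by (rule sum.mono_neutral_cong_right) auto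
  finally show ?thesis
    by (simp add: fpoly_eq_coeff_generating_function u_def s_def atLeast0AtMost)
qed

lemma degree_fpoly:
  assumes "prime CHAR('a::field)" "a < CHAR('a)" "b < CHAR('a)" "c \<le> a + b"
  shows "degree (fpoly a b c :: 'a poly) = min a c"
  unfolding fpoly_def
proof (rule degree_sum_monom_eq)
  show "(of_nat ((a choose min a c) * (b choose (c - min a c))) :: 'a) \<noteq> 0"
    using assms of_nat_choose_neq_0_of_less_CHAR[where 'a='a] by simp
  show "(of_nat ((a choose j) * (b choose (c - j))) :: 'a) = 0" if "min a c < j" "j \<le> c" for j
    using that by (simp add: binomial_eq_0)
qed simp

lemma order_0_fpoly:
  assumes "prime CHAR('a::field)" "a < CHAR('a)" "b < CHAR('a)" "c \<le> a + b"
  shows "order 0 (fpoly a b c :: 'a poly) = c - b"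
proof -
  have "(fpoly a b c :: 'a poly) =
      (\<Sum>j\<in>{0..c}. smult (of_nat ((a choose j) * (b choose (c - j)))) ([:-0, 1:] ^ j))"
    by (simp add: fpoly_def monom_altdef)
  also have "order 0 \<dots> = c - b"
  proof (rule order_sum_smult_linear_power_eq)
    show "(of_nat ((a choose (c - b)) * (b choose (c - (c - b)))) :: 'a) \<noteq> 0"
      using assms of_nat_choose_neq_0_of_less_CHAR[where 'a='a] by simp
    show "(of_nat ((a choose j) * (b choose (c - j))) :: 'a) = 0" if "j < c - b" for j
      using that by (simp add: binomial_eq_0)
  qed simp
  finally show ?thesis .
qed

lemma order_1_fpoly:
  fixes p :: nat
  defines "p \<equiv> CHAR('a::field)"
  assumes "prime p" "a < p" "b < p" "c \<le> a + b"
  shows "order 1 (fpoly a b c :: 'a poly) =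
    (if p \<le> a + b \<and> a + b - (p - 1) \<le> c \<and> c < p then a + b - (p - 1) else 0)"
proof -
  define g :: "nat \<Rightarrow> 'a" where "g j = of_nat ((a choose j) * ((a + b - j) choose (c - j)))" for j
  have g_eq_0_iff: "g j = 0 \<longleftrightarrow> p dvd ((a + b - j) choose (c - j))" if "j \<le> a" for j
    using assms that of_nat_choose_neq_0_of_less_CHAR[of j a, where 'a='a]
    by (simp add: g_def of_nat_eq_0_iff_char_dvd)
  have expansion: "order 1 (fpoly a b c :: 'a poly) = order 1 (\<Sum>j\<in>{0..c}. smult (g j) ([:-1, 1:] ^ j))"
    by (simp add: fpoly_expansion_at_1 g_def)
  show ?thesis
  proof (cases "p \<le> a + b \<and> a + b - (p - 1) \<le> c \<and> c < p")
    case True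
    have "order 1 (\<Sum>j\<in>{0..c}. smult (g j) ([:-1, 1:] ^ j)) = a + b - (p - 1)"
      using True assms by (intro order_sum_smult_linear_power_eq)
        (auto simp: g_eq_0_iff prime_dvd_choose_iff)
    with expansion show ?thesis by (simp only: if_P[OF True])
  next
    case False
    have "order 1 (\<Sum>j\<in>{0..c}. smult (g j) ([:-1, 1:] ^ j)) = 0"
      using False assms by (intro order_sum_smult_linear_power_eq)
        (auto simp: g_eq_0_iff prime_dvd_choose_iff)
    with False expansion show ?thesis by simp
  qed
qed

theorem lemmaA2:
  fixes p a b c :: nat
  assumes "prime p" and "CHAR('a::field) = p"
    and "a < p" and "b < p" and "c \<le> a + b"
  shows "degree (fpoly a b c :: 'a poly) = min a c
    \<and> order 0 (fpoly a b c :: 'a poly) = max 0 (c - b)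
    \<and> order 1 (fpoly a b c :: 'a poly) =
           (if int a + int b - (int p - 1) \<le> int c \<and> int c \<le> int p - 1 \<and> int p - 1 < int a + int b
            then a + b - (p - 1) else 0)"
proof -
  have "(int a + int b - (int p - 1) \<le> int c \<and> int c \<le> int p - 1 \<and> int p - 1 < int a + int b)
      \<longleftrightarrow> (p \<le> a + b \<and> a + b - (p - 1) \<le> c \<and> c < p)"
    using \<open>prime p\<close> prime_gt_0_nat[of p] by linarith
  then show ?thesis
    using assms degree_fpoly[where 'a='a] order_0_fpoly[where 'a='a] order_1_fpoly[where 'a='a]
    by simp
qed

end
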